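(* Let $p$ be a prime with $p\equiv -1\pmod 4$. Then for all integers $\alpha\ge0$ and $n\ge0$, \[ \sum_{n=0}^{\infty}b_{16}\!\left(p^{2\alpha}n+\frac{5p^{2\alpha}-5}{8}\right)q^{n} \equiv \psi(q)\psi(q^4) \pmod 2, \] and \[ b_{16}\!\left(p^{2\alpha+2}n+\frac{(8i+5p)p^{2\alpha+1}-5}{8}\right)\equiv 0 \pmod 2,\qquad i=1,2,\ldots,p-1. \]
   Context: For a positive integer $\ell$, $b_\ell(n)$ denotes the number of partitions of $n$ having no part divisible by $\ell$. $\psi(q)=\sum_{n\ge0}q^{n(n+1)/2}$. A congruence between power series modulo $2$ means coefficientwise congruence. *)

theory Defs
  imports "HOL-Library.Multiset" "HOL-Computational_Algebra.Formal_Power_Series"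
begin

definition b_ell :: "nat \<Rightarrow> nat \<Rightarrow> nat" where
  "b_ell l n = card {P :: nat multiset. (\<forall>x\<in>#P. 0 < x \<and> \<not> l dvd x) \<and> sum_mset P = n}"

definition psi :: "int fps" where
  "psi = Abs_fps (\<lambda>n. if \<exists>k::nat. n = k * (k + 1) div 2 then 1 else 0)"

definition psi4 :: "int fps" where
  "psi4 = Abs_fps (\<lambda>n. if 4 dvd n \<and> (\<exists>k::nat. n div 4 = k * (k + 1) div 2) then 1 else 0)"

end

theory Submission
  imports
    Defs
    "HOL-Number_Theory.Residues"  (* before Polynomial, so that coeff is the polynomial coefficient *)
    "HOL-Library.Z2"
    "HOL-Computational_Algebra.Polynomial"
begin

text \<open>
  Over the field with two elements squaring is additive, so \<open>(q^16; q^16)\<^sub>\<infinity> = (q; q)\<^sub>\<infinity>^16\<close>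
  and the generating function \<open>\<Prod>\<^bsub>16 \<not>| k\<^esub> 1/(1 - q^k)\<close> of \<open>b_16\<close> becomes
  \<open>(q; q)\<^sub>\<infinity>^15 = (q; q)\<^sub>\<infinity>^3 (q^4; q^4)\<^sub>\<infinity>^3\<close>. Jacobi's identity
  \<open>(q; q)\<^sub>\<infinity>^3 = \<Sum> (-1)^k (2k + 1) q^(k(k+1)/2)\<close> reduces modulo 2 to \<open>(q; q)\<^sub>\<infinity>^3 = \<psi>(q)\<close>.
  Hence \<open>b_16(n)\<close> has the parity of the coefficient of \<open>q^n\<close> in \<open>\<psi>(q) \<psi>(q^4)\<close>, which counts
  the representations \<open>8n + 5 = x^2 + 4y^2\<close> with \<open>x, y\<close> odd. As \<open>-1\<close> is not a square modulo
  \<open>p \<equiv> 3 (mod 4)\<close>, a representation of a multiple of \<open>p\<close> has \<open>p\<close> dividing both \<open>x\<close> and \<open>y\<close>: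
  the count is unchanged by a factor \<open>p^2\<close> and vanishes for \<open>pM\<close> with \<open>p \<not>| M\<close>.

  Jacobi's identity is proved modulo 2 and up to degree \<open>N\<close> from the finite product
  \<open>z^n \<Prod>\<^bsub>k=1..n\<^esub> (1 + q^k z)(1 + q^(k-1)/z)\<close>: expanding it by the \<open>q\<close>-binomial theorem and
  differentiating at \<open>z = 1\<close> writes \<open>(q; q)\<^sub>n (q; q)\<^bsub>n-1\<^esub>\<close> as a sum of Gaussian binomial
  coefficients, each of which agrees with \<open>1/(q; q)\<^sub>N\<close> below degree \<open>N\<close> once \<open>n\<close> is large.
\<close>

unbundle fps_syntax

section \<open>Power series over the field with two elements\<close>

lemma of_nat_eq_of_int_bit_iff: "(of_nat a :: bit) = of_int b \<longleftrightarrow> int a mod 2 = b mod 2"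
proof -
  have "(of_nat a :: bit) = of_int b \<longleftrightarrow> (even a \<longleftrightarrow> even b)"
    by (simp only: Z2.bit_eq_iff even_of_nat even_of_int_iff)
  then show ?thesis
    by (simp add: even_iff_mod_2_eq_zero) presburger
qed

lemma of_nat_bit: "(of_nat n :: bit) = of_bool (odd n)"
  by (simp only: Z2.bit_eq_iff even_of_nat) simp

lemma fps_bit_two [simp]: "(2 :: bit fps) = 0"
  by (simp add: numeral_fps_const)

lemma fps_bit_add_self [simp]: "(f :: bit fps) + f = 0"
  by (simp flip: mult_2)

lemma fps_bit_minus: "(f :: bit fps) - g = f + g"
  by (simp add: fps_eq_iff)

lemma fps_bit_one_plus_square: "(1 + f :: bit fps) ^ 2 = 1 + f ^ 2"
proof -
  have "(1 + f) ^ 2 = 1 + (f + f) + f ^ 2"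
    by (simp add: power2_eq_square algebra_simps)
  then show ?thesis by simp
qed

definition fps_eq_upto :: "nat \<Rightarrow> 'a::zero fps \<Rightarrow> 'a fps \<Rightarrow> bool" where
  "fps_eq_upto N f g \<longleftrightarrow> (\<forall>k\<le>N. f $ k = g $ k)"

lemma fps_eq_upto_refl [simp]: "fps_eq_upto N f f"
  by (simp add: fps_eq_upto_def)

lemma fps_eq_upto_sym: "fps_eq_upto N f g \<Longrightarrow> fps_eq_upto N g f"
  by (simp add: fps_eq_upto_def)

lemma fps_eq_upto_trans [trans]: "fps_eq_upto N f g \<Longrightarrow> fps_eq_upto N g h \<Longrightarrow> fps_eq_upto N f h"
  by (simp add: fps_eq_upto_def)

lemma fps_eq_upto_add:
  "fps_eq_upto N f g \<Longrightarrow> fps_eq_upto N f' g' \<Longrightarrow> fps_eq_upto N (f + f') (g + g')"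
  by (simp add: fps_eq_upto_def)

lemma fps_eq_upto_mult:
  fixes f g f' g' :: "'a::comm_semiring_1 fps"
  assumes "fps_eq_upto N f g" "fps_eq_upto N f' g'"
  shows "fps_eq_upto N (f * f') (g * g')"
  using assms by (auto simp: fps_eq_upto_def fps_mult_nth intro!: sum.cong)

lemma fps_eq_upto_sum:
  "(\<And>i. i \<in> A \<Longrightarrow> fps_eq_upto N (f i) (g i)) \<Longrightarrow> fps_eq_upto N (sum f A) (sum g A)"
  by (induction A rule: infinite_finite_induct) (auto intro: fps_eq_upto_add)

lemma fps_eq_upto_prod:
  fixes f g :: "'b \<Rightarrow> 'a::comm_semiring_1 fps"
  shows "(\<And>i. i \<in> A \<Longrightarrow> fps_eq_upto N (f i) (g i)) \<Longrightarrow> fps_eq_upto N (prod f A) (prod g A)"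
  by (induction A rule: infinite_finite_induct) (auto intro: fps_eq_upto_mult)

lemma fps_eq_upto_prod_subset:
  fixes f :: "'b \<Rightarrow> 'a::comm_semiring_1 fps"
  assumes "finite B" "A \<subseteq> B" "\<And>i. i \<in> B - A \<Longrightarrow> fps_eq_upto N (f i) 1"
  shows "fps_eq_upto N (prod f B) (prod f A)"
proof -
  have "fps_eq_upto N (prod f A * prod f (B - A)) (prod f A * prod (\<lambda>_. 1) (B - A))"
    using assms(3) by (intro fps_eq_upto_mult fps_eq_upto_prod) auto
  moreover have "prod f B = prod f A * prod f (B - A)"
    using assms(1,2) by (metis prod.subset_diff mult.commute)
  ultimately show ?thesis by simp
qed

lemma fps_eq_upto_X_power_mult: "N < k \<Longrightarrow> fps_eq_upto N (fps_X ^ k * f) (fps_X ^ k * g)"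
  by (simp add: fps_eq_upto_def fps_X_power_mult_nth)

lemma fps_eq_upto_cancel:
  fixes f g u :: "'a::field fps"
  assumes "fps_eq_upto N (f * u) (g * u)" "u $ 0 \<noteq> 0"
  shows "fps_eq_upto N f g"
proof -
  have "fps_eq_upto N (f * u * inverse u) (g * u * inverse u)"
    using assms(1) by (rule fps_eq_upto_mult) simp
  moreover have "u * inverse u = 1"
    using assms(2) by (rule inverse_mult_eq_1')
  ultimately show ?thesis by (simp add: mult.assoc)
qed

lemma fps_compose_X_power_nth:
  fixes f :: "'a::comm_ring_1 fps"
  assumes "0 < k"
  shows "(f oo fps_X ^ k) $ n = (if k dvd n then f $ (n div k) else 0)"
proof -
  have "(f oo fps_X ^ k) $ n = (\<Sum>i=0..n. if i = n div k then (if k dvd n then f $ i else 0) else 0)"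
    unfolding fps_compose_nth using assms
    by (intro sum.cong refl) (auto simp flip: power_mult)
  also have "\<dots> = (if k dvd n then f $ (n div k) else 0)"
    by (simp add: sum.delta)
  finally show ?thesis .
qed

lemma fps_eq_upto_compose_X_power:
  fixes f g :: "'a::comm_ring_1 fps"
  assumes "fps_eq_upto N f g" "0 < k"
  shows "fps_eq_upto N (f oo fps_X ^ k) (g oo fps_X ^ k)"
  using assms by (auto simp: fps_eq_upto_def fps_compose_X_power_nth intro: div_le_dividend order.trans)

definition fps_reduce :: "int fps \<Rightarrow> 'a::ring_1 fps" where
  "fps_reduce f = Abs_fps (\<lambda>n. of_int (f $ n))"

lemma fps_reduce_nth [simp]: "fps_reduce f $ n = of_int (f $ n)"
  by (simp add: fps_reduce_def)

lemma fps_reduce_mult: "fps_reduce (f * g) = (fps_reduce f * fps_reduce g :: 'a::comm_ring_1 fps)"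
  by (simp add: fps_eq_iff fps_mult_nth)

lemma fps_reduce_compose_X_power:
  "0 < k \<Longrightarrow> fps_reduce (f oo fps_X ^ k) = (fps_reduce f oo fps_X ^ k :: 'a::comm_ring_1 fps)"
  by (simp add: fps_eq_iff fps_compose_X_power_nth)

section \<open>A finite form of Jacobi's identity modulo 2\<close>

definition tri :: "nat \<Rightarrow> nat" where
  "tri m = m * (m + 1) div 2"

lemma two_times_tri: "2 * tri m = m * (m + 1)"
  unfolding tri_def by simp

lemma tri_Suc: "tri (Suc m) = tri m + Suc m"
  unfolding tri_def by simp

lemma strict_mono_tri: "strict_mono tri"
  unfolding strict_mono_Suc_iff by (simp add: tri_Suc)

lemma tri_eq_iff [simp]: "tri a = tri b \<longleftrightarrow> a = b"
  using strict_mono_tri by (rule strict_mono_eq)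

lemma le_tri: "m \<le> tri m"
  by (induction m) (auto simp: tri_Suc)

text \<open>The partial Euler product \<open>(q; q)\<^sub>n = \<Prod>\<^bsub>k=1..n\<^esub> (1 - q^k)\<close> modulo 2.\<close>

definition euler_prod :: "nat \<Rightarrow> bit fps" where
  "euler_prod n = (\<Prod>k<n. 1 + fps_X ^ Suc k)"

lemma euler_prod_0 [simp]: "euler_prod 0 = 1"
  by (simp add: euler_prod_def)

lemma euler_prod_Suc: "euler_prod (Suc n) = euler_prod n * (1 + fps_X ^ Suc n)"
  by (simp add: euler_prod_def)

lemma euler_prod_nth_0 [simp]: "euler_prod n $ 0 = 1"
  by (induction n) (simp_all add: euler_prod_Suc)

lemma fps_eq_upto_euler_prod: "N \<le> m \<Longrightarrow> fps_eq_upto N (euler_prod m) (euler_prod N)"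
  unfolding euler_prod_def by (rule fps_eq_upto_prod_subset) (auto simp: fps_eq_upto_def)

fun gauss_binom :: "nat \<Rightarrow> nat \<Rightarrow> bit fps" where
  "gauss_binom L 0 = 1"
| "gauss_binom 0 (Suc m) = 0"
| "gauss_binom (Suc L) (Suc m) = gauss_binom L (Suc m) + fps_X ^ (L - m) * gauss_binom L m"

lemma gauss_binom_eq_0: "L < m \<Longrightarrow> gauss_binom L m = 0"
proof (induction L arbitrary: m)
  case 0
  then show ?case by (cases m) auto
next
  case (Suc L)
  then show ?case by (cases m) auto
qed

lemma gauss_binom_diag [simp]: "gauss_binom L L = 1"
  by (induction L) (auto simp: gauss_binom_eq_0)

lemma gauss_binom_mult_euler_prod:
  "m \<le> L \<Longrightarrow> gauss_binom L m * euler_prod m * euler_prod (L - m) = euler_prod L"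
proof (induction L arbitrary: m)
  case 0
  then show ?case by simp
next
  case (Suc L)
  show ?case
  proof (cases m)
    case 0
    then show ?thesis by simp
  next
    case (Suc k)
    show ?thesis
    proof (cases "k = L")
      case True
      then show ?thesis using Suc by (simp add: gauss_binom_eq_0)
    next
      case False
      with Suc Suc.prems have "k < L" by simp
      have IH1: "gauss_binom L (Suc k) * euler_prod (Suc k) * euler_prod (L - Suc k) = euler_prod L"
        and IH2: "gauss_binom L k * euler_prod k * euler_prod (L - k) = euler_prod L"
        using Suc.IH \<open>k < L\<close> by simp_all
      have split: "euler_prod (L - k) = euler_prod (L - Suc k) * (1 + fps_X ^ (L - k))"
        using \<open>k < L\<close> by (metis Suc_diff_Suc euler_prod_Suc)
      have X_pow: "fps_X ^ (L - k) * fps_X ^ Suc k = (fps_X ^ Suc L :: bit fps)"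
        using \<open>k < L\<close> by (simp flip: power_add)
      have "gauss_binom (Suc L) m * euler_prod m * euler_prod (Suc L - m)
          = gauss_binom L (Suc k) * euler_prod (Suc k) * euler_prod (L - Suc k) * (1 + fps_X ^ (L - k))
            + fps_X ^ (L - k) * (gauss_binom L k * euler_prod k * euler_prod (L - k)) * (1 + fps_X ^ Suc k)"
        using Suc by (simp add: split euler_prod_Suc algebra_simps)
      also have "\<dots> = euler_prod L * (1 + (fps_X ^ (L - k) + fps_X ^ (L - k)) + fps_X ^ (L - k) * fps_X ^ Suc k)"
        by (simp only: IH1 IH2) (simp add: algebra_simps)
      also have "\<dots> = euler_prod (Suc L)"
        by (simp only: fps_bit_add_self add_0_right X_pow euler_prod_Suc)
      finally show ?thesis .
    qed
  qed
qed

text \<open>\<open>\<Prod>\<^bsub>k=1..L\<^esub> (1 + q^k z)\<close> as a polynomial in \<open>z\<close>; its coefficients are given by Rothe's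
  \<open>q\<close>-binomial theorem.\<close>

definition rothe_poly :: "nat \<Rightarrow> bit fps poly" where
  "rothe_poly L = (\<Prod>k<L. [:1, fps_X ^ Suc k:])"

lemma coeff_rothe_poly: "coeff (rothe_poly L) m = fps_X ^ tri m * gauss_binom L m"
proof (induction L arbitrary: m)
  case 0
  then show ?case by (cases m) (auto simp: rothe_poly_def tri_def)
next
  case (Suc L)
  have rothe_Suc: "rothe_poly (Suc L) = rothe_poly L + pCons 0 (smult (fps_X ^ Suc L) (rothe_poly L))"
    by (simp add: rothe_poly_def mult_pCons_right)
  show ?case
  proof (cases m)
    case 0
    then show ?thesis using Suc.IH[of 0] by (simp add: rothe_Suc tri_def)
  next
    case (Suc k)
    have "coeff (rothe_poly (Suc L)) m = fps_X ^ tri (Suc k) * gauss_binom L (Suc k) + fps_X ^ Suc L * (fps_X ^ tri k * gauss_binom L k)"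
      by (simp add: rothe_Suc Suc Suc.IH)
    also have "\<dots> = fps_X ^ tri (Suc k) * gauss_binom (Suc L) (Suc k)"
    proof (cases "k \<le> L")
      case True
      then have "Suc L + tri k = tri (Suc k) + (L - k)"
        by (simp add: tri_Suc)
      then have X_pow: "fps_X ^ Suc L * fps_X ^ tri k = (fps_X ^ tri (Suc k) * fps_X ^ (L - k) :: bit fps)"
        by (simp only: flip: power_add)
      show ?thesis
        by (simp only: gauss_binom.simps distrib_left mult.assoc[symmetric] X_pow)
    next
      case False
      then show ?thesis by (simp add: gauss_binom_eq_0)
    qed
    finally show ?thesis using Suc by simp
  qed
qed

text \<open>The truncated Jacobi triple product \<open>z^n \<Prod>\<^bsub>k=1..n\<^esub> (1 + q^k z)(1 + q^(k-1)/z)\<close>.\<close>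

definition jacobi_poly :: "nat \<Rightarrow> bit fps poly" where
  "jacobi_poly n = rothe_poly n * (\<Prod>j<n. [:fps_X ^ j, 1:])"

lemma jacobi_poly_pcompose:
  "pcompose (jacobi_poly n) [:0, fps_X ^ n:] = smult (fps_X ^ (\<Sum>j<n. j)) (rothe_poly (2 * n))"
proof -
  have upper: "pcompose (rothe_poly n) [:0, fps_X ^ n:] = (\<Prod>i<n. [:1, fps_X ^ Suc (n + i):])"
    unfolding rothe_poly_def pcompose_prod
    by (intro prod.cong) (auto simp: pcompose_pCons power_add)
  have "pcompose [:fps_X ^ j, 1:] [:0, fps_X ^ n:] = smult (fps_X ^ j) [:1, fps_X ^ (n - j):]"
    if "j < n" for j
    using that by (simp add: pcompose_pCons flip: power_add)
  then have lower: "pcompose (\<Prod>j<n. [:fps_X ^ j, 1:]) [:0, fps_X ^ n:]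
      = smult (fps_X ^ (\<Sum>j<n. j)) (\<Prod>j<n. [:1, fps_X ^ (n - j):])"
    unfolding pcompose_prod power_sum prod_smult[symmetric] by (intro prod.cong) auto
  have reverse: "(\<Prod>k<n. [:1, fps_X ^ Suc k:]) = (\<Prod>j<n. [:1, fps_X ^ (n - j):] :: bit fps poly)"
  proof -
    have "(\<Prod>k<n. [:1, fps_X ^ Suc k:]) = (\<Prod>j<n. [:1, fps_X ^ Suc (n - Suc j):] :: bit fps poly)"
      by (rule prod.nat_diff_reindex[symmetric])
    also have "\<dots> = (\<Prod>j<n. [:1, fps_X ^ (n - j):])"
      by (intro prod.cong refl) (simp add: Suc_diff_Suc del: power_Suc)
    finally show ?thesis .
  qed
  have split: "(\<Prod>k<n + m. f k) = (\<Prod>k<n. f k) * (\<Prod>k<m. f (n + k))"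
    for m and f :: "nat \<Rightarrow> bit fps poly"
    by (induction m) (auto simp: mult.assoc)
  have "rothe_poly (2 * n) = (\<Prod>j<n. [:1, fps_X ^ (n - j):]) * (\<Prod>i<n. [:1, fps_X ^ Suc (n + i):])"
    unfolding rothe_poly_def mult_2 by (simp only: split reverse)
  then show ?thesis
    unfolding jacobi_poly_def pcompose_mult upper lower by (simp add: mult_smult_right mult.commute)
qed

definition jacobi_exp :: "nat \<Rightarrow> nat \<Rightarrow> nat" where
  "jacobi_exp n m = (if n \<le> m then tri (m - n) else tri (n - m - 1))"

lemma jacobi_exp_eq: "n * m + jacobi_exp n m = (\<Sum>j<n. j) + tri m"
proof -
  have sum: "2 * (\<Sum>j<n. j) = n * (n - 1)"
    by (induction n) (auto simp: algebra_simps)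
  have "2 * (n * m + jacobi_exp n m) = 2 * ((\<Sum>j<n. j) + tri m)"
  proof (cases "n \<le> m")
    case True
    then obtain d where m: "m = n + d"
      using le_Suc_ex by blast
    have "2 * jacobi_exp n m = d * (d + 1)"
      using True by (simp add: jacobi_exp_def m two_times_tri)
    moreover have "2 * tri m = (n + d) * (n + d + 1)"
      by (simp add: m two_times_tri)
    ultimately show ?thesis
      unfolding distrib_left sum by (cases n) (simp_all add: m algebra_simps)
  next
    case False
    then obtain d where n: "n = m + d + 1"
      by (metis add.commute add_Suc less_imp_Suc_add not_le plus_1_eq_Suc)
    have "2 * jacobi_exp n m = d * (d + 1)"
      using False by (simp add: jacobi_exp_def n two_times_tri)
    moreover have "2 * tri m = m * (m + 1)"
      by (rule two_times_tri)
    ultimately show ?thesis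
      unfolding distrib_left sum by (simp add: n algebra_simps)
  qed
  then show ?thesis by simp
qed

lemma coeff_jacobi_poly: "coeff (jacobi_poly n) m = fps_X ^ jacobi_exp n m * gauss_binom (2 * n) m"
proof -
  have "fps_X ^ (n * m) * coeff (jacobi_poly n) m
      = fps_X ^ (\<Sum>j<n. j) * (fps_X ^ tri m * gauss_binom (2 * n) m)"
    using arg_cong[OF jacobi_poly_pcompose, of "\<lambda>p. coeff p m"]
    by (simp add: coeff_pcompose_linear coeff_rothe_poly power_mult mult.assoc)
  also have "\<dots> = fps_X ^ (n * m) * (fps_X ^ jacobi_exp n m * gauss_binom (2 * n) m)"
    by (simp add: mult.assoc flip: power_add jacobi_exp_eq)
  finally show ?thesis by simp
qed

lemma poly_eq_sum_lessThan:
  fixes p :: "'a::comm_semiring_1 poly"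
  shows "degree p < K \<Longrightarrow> poly p x = (\<Sum>i<K. coeff p i * x ^ i)"
proof -
  assume "degree p < K"
  have "poly p x = (\<Sum>i\<le>degree p. coeff p i * x ^ i)"
    by (rule poly_altdef)
  also have "\<dots> = (\<Sum>i<K. coeff p i * x ^ i)"
    using \<open>degree p < K\<close> by (intro sum.mono_neutral_left) (auto simp: coeff_eq_0)
  finally show ?thesis .
qed

text \<open>Differentiate the Jacobi product at \<open>z = 1\<close>: its factor \<open>1 + z\<close> vanishes there in
  characteristic 2, so by the product rule only the cofactor survives.\<close>

lemma euler_prod_mult_eq_sum:
  assumes "0 < n"
  shows "euler_prod n * euler_prod (n - 1)
    = (\<Sum>i<2 * n. of_nat (Suc i) * (fps_X ^ jacobi_exp n (Suc i) * gauss_binom (2 * n) (Suc i)))"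
proof -
  obtain n' where n: "n = Suc n'"
    using assms by (cases n) auto
  define R where "R = rothe_poly n * (\<Prod>j<n'. [:fps_X ^ Suc j, 1:])"
  have jacobi_R: "jacobi_poly n = [:1, 1:] * R"
    unfolding jacobi_poly_def R_def n prod.lessThan_Suc_shift by (simp add: mult_ac)
  have "pderiv (jacobi_poly n) = [:1, 1:] * pderiv R + R"
    unfolding jacobi_R pderiv_mult by (simp add: pderiv_pCons)
  then have "poly (pderiv (jacobi_poly n)) 1 = poly R 1"
    by simp
  also have "\<dots> = euler_prod n * euler_prod n'"
    by (simp add: R_def rothe_poly_def poly_prod euler_prod_def add.commute del: power_Suc)
  finally have value_at_1: "poly (pderiv (jacobi_poly n)) 1 = euler_prod n * euler_prod (n - 1)"
    by (simp add: n)
  have coeff: "coeff (pderiv (jacobi_poly n)) i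
      = of_nat (Suc i) * (fps_X ^ jacobi_exp n (Suc i) * gauss_binom (2 * n) (Suc i))" for i
    by (simp add: coeff_pderiv coeff_jacobi_poly)
  have "degree (pderiv (jacobi_poly n)) \<le> 2 * n - 1"
    by (rule degree_le) (auto simp: coeff gauss_binom_eq_0)
  then have "poly (pderiv (jacobi_poly n)) 1 = (\<Sum>i<2 * n. coeff (pderiv (jacobi_poly n)) i * 1 ^ i)"
    using assms by (intro poly_eq_sum_lessThan) simp
  then show ?thesis
    using value_at_1 by (simp add: coeff)
qed

lemma jacobi_exp_le_imp:
  "jacobi_exp n m \<le> N \<Longrightarrow> n \<le> m + N + 1 \<and> m \<le> n + N"
  unfolding jacobi_exp_def using le_tri[of "m - n"] le_tri[of "n - m - 1"]
  by (auto split: if_splits)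

lemma jacobi_exp_eq_tri_iff:
  "j < n \<Longrightarrow> jacobi_exp n m = tri j \<longleftrightarrow> m = n + j \<or> m = n - j - 1"
  unfolding jacobi_exp_def by auto

lemma gauss_binom_mult_euler_prod_eq_upto:
  assumes "N \<le> m" "N \<le> L - m" "m \<le> L"
  shows "fps_eq_upto N (gauss_binom L m * euler_prod N) 1"
proof -
  have "fps_eq_upto N (gauss_binom L m * euler_prod m * euler_prod (L - m))
      (gauss_binom L m * euler_prod N * euler_prod N)"
    using assms by (intro fps_eq_upto_mult fps_eq_upto_refl fps_eq_upto_euler_prod)
  moreover have "fps_eq_upto N (euler_prod L) (euler_prod N)"
    using assms by (intro fps_eq_upto_euler_prod) simp
  ultimately have "fps_eq_upto N (gauss_binom L m * euler_prod N * euler_prod N) (1 * euler_prod N)"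
    using gauss_binom_mult_euler_prod[OF assms(3)]
    by (metis fps_eq_upto_sym fps_eq_upto_trans mult_1)
  then show ?thesis
    by (rule fps_eq_upto_cancel) simp
qed

lemma sum_jacobi_monomials_eq_upto_psi:
  assumes "N + 2 \<le> n"
  shows "fps_eq_upto N (\<Sum>i<2 * n. of_nat (Suc i) * fps_X ^ jacobi_exp n (Suc i) :: bit fps) (fps_reduce psi)"
  unfolding fps_eq_upto_def
proof (intro allI impI)
  fix k assume "k \<le> N"
  have "(\<Sum>i<2 * n. of_nat (Suc i) * fps_X ^ jacobi_exp n (Suc i) :: bit fps) $ k
      = (\<Sum>i<2 * n. if jacobi_exp n (Suc i) = k then of_nat (Suc i) else 0)"
    unfolding fps_sum_nth fps_of_nat[symmetric] fps_mult_left_const_nth fps_X_power_nth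
    by (intro sum.cong refl) simp
  also have "\<dots> = (\<Sum>i | i < 2 * n \<and> jacobi_exp n (Suc i) = k. of_nat (Suc i))"
    by (simp add: sum.If_cases Int_def conj_commute)
  also have "\<dots> = of_int (psi $ k)"
  proof (cases "\<exists>j. k = tri j")
    case True
    then obtain j where j: "k = tri j" by blast
    with \<open>k \<le> N\<close> have "j \<le> N"
      using le_tri[of j] by simp
    \<comment> \<open>the two weights add up to the odd number \<open>2n - 1\<close>\<close>
    with assms have "{i. i < 2 * n \<and> jacobi_exp n (Suc i) = k} = {n + j - 1, n - j - 2}"
      unfolding j by (auto simp: jacobi_exp_eq_tri_iff)
    moreover have "n + j - 1 \<noteq> n - j - 2"
      using assms \<open>j \<le> N\<close> by simp
    ultimately have "(\<Sum>i | i < 2 * n \<and> jacobi_exp n (Suc i) = k. of_nat (Suc i))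
        = (of_nat (Suc (n + j - 1)) + of_nat (Suc (n - j - 2)) :: bit)"
      by (simp del: of_nat_Suc)
    also have "\<dots> = of_nat (Suc (n + j - 1) + Suc (n - j - 2))"
      by (simp only: of_nat_add)
    also have "\<dots> = 1"
      using assms \<open>j \<le> N\<close> unfolding of_nat_bit by simp
    also have "1 = of_int (psi $ k)"
      using True by (simp add: psi_def tri_def)
    finally show ?thesis .
  next
    case False
    then have "{i. i < 2 * n \<and> jacobi_exp n (Suc i) = k} = {}"
      by (auto simp: jacobi_exp_def split: if_splits)
    moreover have "psi $ k = 0"
      using False by (simp add: psi_def tri_def)
    ultimately show ?thesis
      by (simp only: sum.empty of_int_0)
  qed
  finally show "(\<Sum>i<2 * n. of_nat (Suc i) * fps_X ^ jacobi_exp n (Suc i) :: bit fps) $ k = fps_reduce psi $ k"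
    by simp
qed

lemma jacobi_term_eq_upto:
  assumes "2 * N + 1 \<le> n" "i < 2 * n"
  shows "fps_eq_upto N (c * fps_X ^ jacobi_exp n (Suc i) * (gauss_binom (2 * n) (Suc i) * euler_prod N))
    (c * fps_X ^ jacobi_exp n (Suc i))"
proof (cases "jacobi_exp n (Suc i) \<le> N")
  case True
  then have "fps_eq_upto N (gauss_binom (2 * n) (Suc i) * euler_prod N) 1"
    using jacobi_exp_le_imp[OF True] assms by (intro gauss_binom_mult_euler_prod_eq_upto) auto
  then show ?thesis
    using fps_eq_upto_mult[OF fps_eq_upto_refl] by (metis mult_1_right)
next
  case False
  then have "fps_eq_upto N (fps_X ^ jacobi_exp n (Suc i) * (c * (gauss_binom (2 * n) (Suc i) * euler_prod N)))
      (fps_X ^ jacobi_exp n (Suc i) * c)"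
    by (intro fps_eq_upto_X_power_mult) simp
  then show ?thesis
    by (simp only: mult_ac)
qed

lemma euler_prod_cube_eq_upto_psi: "fps_eq_upto N (euler_prod N ^ 3) (fps_reduce psi)"
proof -
  define n where "n = 2 * N + 2"
  then have "0 < n" by simp
  have "fps_eq_upto N (euler_prod N ^ 3) (euler_prod n * euler_prod (n - 1) * euler_prod N)"
    unfolding power3_eq_cube n_def
    by (intro fps_eq_upto_mult fps_eq_upto_refl fps_eq_upto_sym[OF fps_eq_upto_euler_prod]) auto
  also have "euler_prod n * euler_prod (n - 1) * euler_prod N
      = (\<Sum>i<2 * n. of_nat (Suc i) * fps_X ^ jacobi_exp n (Suc i)
          * (gauss_binom (2 * n) (Suc i) * euler_prod N))"
    unfolding euler_prod_mult_eq_sum[OF \<open>0 < n\<close>] sum_distrib_right by (simp only: mult.assoc)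
  also have "fps_eq_upto N \<dots> (\<Sum>i<2 * n. of_nat (Suc i) * fps_X ^ jacobi_exp n (Suc i))"
    by (intro fps_eq_upto_sum jacobi_term_eq_upto) (auto simp: n_def)
  also have "fps_eq_upto N \<dots> (fps_reduce psi)"
    by (rule sum_jacobi_monomials_eq_upto_psi) (simp add: n_def)
  finally show ?thesis .
qed

section \<open>The generating function of partitions with restricted parts\<close>

definition geo_series :: "nat \<Rightarrow> 'a::comm_ring_1 fps" where
  "geo_series k = Abs_fps (\<lambda>i. if k dvd i then 1 else 0)"

lemma geo_series_mult: "0 < k \<Longrightarrow> geo_series k * (1 - fps_X ^ k) = (1 :: 'a::comm_ring_1 fps)"
proof (rule fps_ext)
  fix i assume "0 < k"
  have "(geo_series k * (1 - fps_X ^ k)) $ i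
      = (if k dvd i then 1 else 0) - (if i < k then 0 else if k dvd (i - k) then 1 else 0 :: 'a)"
    by (simp add: geo_series_def algebra_simps fps_X_power_mult_nth)
  also have "\<dots> = (1 :: 'a fps) $ i"
    using \<open>0 < k\<close> by (auto simp: dvd_diff_nat dvd_imp_le not_less dest: dvd_minus_self[THEN iffD1])
  finally show "(geo_series k * (1 - fps_X ^ k)) $ i = (1 :: 'a fps) $ i" .
qed

lemma geo_series_mult_nth:
  assumes "0 < k"
  shows "(geo_series k * f) $ n = (\<Sum>j\<le>n div k. f $ (n - j * k))"
proof -
  have "(geo_series k * f) $ n = (\<Sum>i\<in>{0..n}. if k dvd i then f $ (n - i) else 0)"
    unfolding fps_mult_nth geo_series_def by (intro sum.cong) simp_all
  also have "\<dots> = (\<Sum>i\<in>{i\<in>{0..n}. k dvd i}. f $ (n - i))"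
    by (rule sum.inter_filter[symmetric]) simp
  also have "{i\<in>{0..n}. k dvd i} = (\<lambda>j. j * k) ` {..n div k}"
  proof (intro Set.set_eqI iffI)
    fix i assume "i \<in> {i\<in>{0..n}. k dvd i}"
    then have "k dvd i" "i \<le> n"
      by auto
    then obtain j where "i = j * k" "j * k \<le> n"
      by (metis dvdE mult.commute)
    then show "i \<in> (\<lambda>j. j * k) ` {..n div k}"
      using assms by (auto simp: less_eq_div_iff_mult_less_eq)
  next
    fix i assume "i \<in> (\<lambda>j. j * k) ` {..n div k}"
    then show "i \<in> {i\<in>{0..n}. k dvd i}"
      using assms by (auto simp: less_eq_div_iff_mult_less_eq)
  qed
  also have "(\<Sum>i\<in>(\<lambda>j. j * k) ` {..n div k}. f $ (n - i)) = (\<Sum>j\<le>n div k. f $ (n - j * k))"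
    using assms by (intro sum.reindex_cong[where l = "\<lambda>j. j * k"]) (auto simp: inj_on_def)
  finally show ?thesis .
qed

definition partitions_in :: "nat set \<Rightarrow> nat \<Rightarrow> nat multiset set" where
  "partitions_in K n = {P. set_mset P \<subseteq> K \<and> sum_mset P = n}"

lemma partitions_in_empty: "partitions_in {} n = (if n = 0 then {{#}} else {})"
  by (auto simp: partitions_in_def)

lemma partitions_in_insert:
  assumes "k \<notin> K" "0 < k"
  shows "partitions_in (insert k K) n
    = (\<Union>j\<in>{..n div k}. (\<lambda>P. replicate_mset j k + P) ` partitions_in K (n - j * k))"
proof (intro Set.set_eqI iffI)
  fix P assume P: "P \<in> partitions_in (insert k K) n"
  define j where "j = count P k"
  define P' where "P' = {#y \<in># P. y \<noteq> k#}"
  have P_eq: "P = replicate_mset j k + P'"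
    unfolding j_def P'_def using multiset_partition[of P "\<lambda>y. y = k"]
    by (simp add: filter_eq_replicate_mset)
  have "j * k + sum_mset P' = n"
    using P by (subst (asm) P_eq) (simp add: partitions_in_def)
  moreover have "set_mset P' \<subseteq> K"
    using P by (auto simp: partitions_in_def P'_def)
  ultimately have "j \<le> n div k" "P' \<in> partitions_in K (n - j * k)"
    using assms(2) by (auto simp: partitions_in_def less_eq_div_iff_mult_less_eq)
  then show "P \<in> (\<Union>j\<in>{..n div k}. (\<lambda>P. replicate_mset j k + P) ` partitions_in K (n - j * k))"
    using P_eq by blast
next
  fix P assume "P \<in> (\<Union>j\<in>{..n div k}. (\<lambda>P. replicate_mset j k + P) ` partitions_in K (n - j * k))"
  then obtain j P' where "j \<le> n div k" "P' \<in> partitions_in K (n - j * k)" "P = replicate_mset j k + P'"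
    by auto
  moreover from \<open>j \<le> n div k\<close> have "j * k \<le> n"
    using assms(2) by (simp add: less_eq_div_iff_mult_less_eq)
  ultimately show "P \<in> partitions_in (insert k K) n"
    by (auto simp: partitions_in_def)
qed

lemma finite_partitions_in: "finite K \<Longrightarrow> 0 \<notin> K \<Longrightarrow> finite (partitions_in K n)"
  by (induction K arbitrary: n rule: finite_induct) (auto simp: partitions_in_empty partitions_in_insert)

lemma card_partitions_in_insert:
  assumes "finite K" "0 \<notin> K" "k \<notin> K" "0 < k"
  shows "card (partitions_in (insert k K) n) = (\<Sum>j\<le>n div k. card (partitions_in K (n - j * k)))"
proof -
  have "count (replicate_mset i k + P) k = i" if "P \<in> partitions_in K m" for i m P
    using that assms(3) by (auto simp: partitions_in_def count_eq_zero_iff)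
  then have disjoint: "(\<lambda>P. replicate_mset i k + P) ` partitions_in K (n - i * k)
      \<inter> (\<lambda>P. replicate_mset j k + P) ` partitions_in K (n - j * k) = {}" if "i \<noteq> j" for i j
    using that by (auto dest!: arg_cong[where f = "\<lambda>P. count P k"])
  have "card (partitions_in (insert k K) n)
      = (\<Sum>j\<le>n div k. card ((\<lambda>P. replicate_mset j k + P) ` partitions_in K (n - j * k)))"
    unfolding partitions_in_insert[OF assms(3,4)]
    using disjoint finite_partitions_in[OF assms(1,2)] by (intro card_UN_disjoint) auto
  also have "\<dots> = (\<Sum>j\<le>n div k. card (partitions_in K (n - j * k)))"
    by (intro sum.cong refl card_image) (simp add: inj_on_def)
  finally show ?thesis .
qed

lemma prod_geo_series_nth:
  assumes "finite K" "0 \<notin> K"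
  shows "(\<Prod>k\<in>K. geo_series k) $ n = (of_nat (card (partitions_in K n)) :: 'a::comm_ring_1)"
  using assms
proof (induction K arbitrary: n rule: finite_induct)
  case empty
  then show ?case by (simp add: partitions_in_empty)
next
  case (insert k K)
  then have "0 < k" by auto
  with insert show ?case
    by (simp add: geo_series_mult_nth card_partitions_in_insert)
qed

lemma b_ell_eq_card_partitions_in: "b_ell l n = card (partitions_in {k. 1 \<le> k \<and> k \<le> n \<and> \<not> l dvd k} n)"
proof -
  have "x \<le> sum_mset P" if "x \<in># P" for x :: nat and P
    using that by (metis le_add1 sum_mset.remove)
  then show ?thesis
    unfolding b_ell_def partitions_in_def by (intro arg_cong[where f = card]) fastforce
qed

section \<open>Partitions without parts divisible by a power of two, modulo 2\<close>

lemma fps_bit_one_plus_power_two_power: "(1 + f :: bit fps) ^ (2 ^ j) = 1 + f ^ (2 ^ j)"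
proof (induction j arbitrary: f)
  case 0
  then show ?case by simp
next
  case (Suc j)
  then show ?case
    using Suc.IH[of "f ^ 2"] by (simp add: power_mult fps_bit_one_plus_square flip: power_Suc2)
qed

lemma euler_prod_power_two_power: "euler_prod n ^ (2 ^ j) = (\<Prod>k<n. 1 + fps_X ^ (2 ^ j * Suc k))"
  unfolding euler_prod_def prod_power_distrib fps_bit_one_plus_power_two_power
  by (intro prod.cong refl) (simp only: power_mult[symmetric] mult.commute)

lemma euler_prod_eq_prod_atLeastAtMost: "euler_prod n = (\<Prod>k\<in>{1..n}. 1 + fps_X ^ k)"
  unfolding euler_prod_def by (simp add: prod.atLeast1_atMost_eq)

lemma euler_prod_split_multiples:
  assumes "0 < l"
  shows "euler_prod n = (\<Prod>i\<in>{1..n div l}. 1 + fps_X ^ (l * i)) * (\<Prod>k\<in>{k. 1 \<le> k \<and> k \<le> n \<and> \<not> l dvd k}. 1 + fps_X ^ k)"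
proof -
  have "euler_prod n = (\<Prod>k\<in>{1..n} \<inter> {k. l dvd k}. 1 + fps_X ^ k) * (\<Prod>k\<in>{1..n} - {k. l dvd k}. 1 + fps_X ^ k)"
    unfolding euler_prod_eq_prod_atLeastAtMost by (rule prod.Int_Diff) simp
  also have "{1..n} \<inter> {k. l dvd k} = (\<lambda>i. l * i) ` {1..n div l}"
    using assms by (auto simp: less_eq_div_iff_mult_less_eq mult.commute[of _ l] elim!: dvdE)
  also have "{1..n} - {k. l dvd k} = {k. 1 \<le> k \<and> k \<le> n \<and> \<not> l dvd k}"
    by auto
  finally show ?thesis
    using assms by (simp add: prod.reindex inj_on_def)
qed

lemma prod_multiples_eq_upto_euler_prod_power:
  "fps_eq_upto n (\<Prod>i\<in>{1..n div 2 ^ j}. 1 + fps_X ^ (2 ^ j * i)) (euler_prod n ^ 2 ^ j)"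
proof -
  have "fps_eq_upto n (\<Prod>k<n. 1 + fps_X ^ (2 ^ j * Suc k)) (\<Prod>k<n div 2 ^ j. 1 + fps_X ^ (2 ^ j * Suc k) :: bit fps)"
  proof (rule fps_eq_upto_prod_subset)
    fix k assume "k \<in> {..<n} - {..<n div 2 ^ j}"
    then have "n div 2 ^ j < Suc k"
      by simp
    then have "n < 2 ^ j * Suc k"
      by (simp only: div_less_iff_less_mult mult.commute zero_less_power zero_less_numeral)
    then show "fps_eq_upto n (1 + fps_X ^ (2 ^ j * Suc k)) 1"
      by (simp add: fps_eq_upto_def)
  qed auto
  then show ?thesis
    unfolding euler_prod_power_two_power by (simp add: prod.atLeast1_atMost_eq fps_eq_upto_sym)
qed

lemma b_ell_two_power_eq_nth:
  assumes "0 < j"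
  shows "(of_nat (b_ell (2 ^ j) n) :: bit) = (euler_prod n ^ (2 ^ j - 1)) $ n"
proof -
  define l :: nat where "l = 2 ^ j"
  define K where "K = {k. 1 \<le> k \<and> k \<le> n \<and> \<not> l dvd k}"
  define G :: "bit fps" where "G = (\<Prod>k\<in>K. geo_series k)"
  have "0 < l"
    by (simp add: l_def)
  have "finite K" "0 \<notin> K"
    by (auto simp: K_def)
  then have G_nth: "G $ n = of_nat (b_ell l n)"
    unfolding G_def by (simp add: prod_geo_series_nth b_ell_eq_card_partitions_in K_def)
  have "G * (\<Prod>k\<in>K. 1 + fps_X ^ k) = 1"
    unfolding G_def prod.distrib[symmetric]
    by (intro prod.neutral ballI) (auto simp: K_def geo_series_mult simp flip: fps_bit_minus)
  then have "G * euler_prod n = (\<Prod>i\<in>{1..n div l}. 1 + fps_X ^ (l * i))"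
    unfolding euler_prod_split_multiples[OF \<open>0 < l\<close>, of n] K_def[symmetric] by (simp add: mult_ac)
  also have "fps_eq_upto n \<dots> (euler_prod n ^ l)"
    unfolding l_def by (rule prod_multiples_eq_upto_euler_prod_power)
  also have "euler_prod n ^ l = euler_prod n ^ (l - 1) * euler_prod n"
    using \<open>0 < l\<close> by (simp flip: power_Suc2)
  finally have "fps_eq_upto n G (euler_prod n ^ (l - 1))"
    by (rule fps_eq_upto_cancel) simp
  then show ?thesis
    using G_nth by (simp add: fps_eq_upto_def l_def)
qed

lemma euler_prod_power_4_eq_compose: "euler_prod n ^ 4 = euler_prod n oo fps_X ^ 4"
proof -
  have X4: "(fps_X ^ 4 :: bit fps) $ 0 = 0"
    by simp
  have "euler_prod n oo fps_X ^ 4 = (\<Prod>k<n. 1 + fps_X ^ (4 * Suc k))"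
    unfolding euler_prod_def fps_compose_prod_distrib[OF X4]
    by (intro prod.cong refl)
      (simp only: fps_compose_add_distrib fps_compose_1 fps_X_power_compose[OF X4] power_mult[symmetric] mult.commute)
  then show ?thesis
    using euler_prod_power_two_power[of n 2] by simp
qed

lemma psi4_eq_compose: "psi4 = psi oo fps_X ^ 4"
  by (simp add: fps_eq_iff fps_compose_X_power_nth psi_def psi4_def)

lemma b_ell_16_eq_psi_psi4_nth: "(of_nat (b_ell 16 n) :: bit) = of_int ((psi * psi4) $ n)"
proof -
  have "fps_eq_upto n ((euler_prod n ^ 3) oo fps_X ^ 4) (fps_reduce psi oo fps_X ^ 4 :: bit fps)"
    by (intro fps_eq_upto_compose_X_power euler_prod_cube_eq_upto_psi) simp
  then have "fps_eq_upto n ((euler_prod n ^ 4) ^ 3) (fps_reduce psi4)"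
    by (simp add: euler_prod_power_4_eq_compose fps_compose_power psi4_eq_compose fps_reduce_compose_X_power)
  then have "fps_eq_upto n (euler_prod n ^ 3 * (euler_prod n ^ 4) ^ 3) (fps_reduce psi * fps_reduce psi4)"
    by (intro fps_eq_upto_mult euler_prod_cube_eq_upto_psi)
  moreover have "euler_prod n ^ 3 * (euler_prod n ^ 4) ^ 3 = euler_prod n ^ (2 ^ 4 - 1)"
    by (simp flip: power_mult power_add)
  ultimately show ?thesis
    using b_ell_two_power_eq_nth[of 4 n] by (simp add: fps_eq_upto_def flip: fps_reduce_mult)
qed

section \<open>Representations by the form x^2 + 4y^2\<close>

lemma psi_nth: "psi $ i = (if \<exists>k. i = tri k then 1 else 0)"
  by (simp add: psi_def tri_def)

lemma psi4_nth: "psi4 $ i = (if 4 dvd i \<and> (\<exists>k. i div 4 = tri k) then 1 else 0)"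
  by (simp add: psi4_def tri_def)

definition tri_reps :: "nat \<Rightarrow> (nat \<times> nat) set" where
  "tri_reps m = {(a, b). tri a + 4 * tri b = m}"

definition odd_reps :: "nat \<Rightarrow> (nat \<times> nat) set" where
  "odd_reps N = {(x, y). odd x \<and> odd y \<and> x * x + 4 * (y * y) = N}"

lemma psi_mult_psi4_nth: "(psi * psi4) $ m = int (card (tri_reps m))"
proof -
  define P where "P i \<longleftrightarrow> (\<exists>a. i = tri a) \<and> 4 dvd (m - i) \<and> (\<exists>b. (m - i) div 4 = tri b)" for i
  have "(psi * psi4) $ m = (\<Sum>i\<in>{0..m}. if P i then 1 else 0)"
    unfolding fps_mult_nth by (intro sum.cong refl) (simp add: psi_nth psi4_nth P_def)
  also have "\<dots> = int (card {i\<in>{0..m}. P i})"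
    by (simp flip: sum.inter_filter)
  also have "{i\<in>{0..m}. P i} = (\<lambda>(a, b). tri a) ` tri_reps m"
  proof (intro Set.set_eqI iffI)
    fix i assume "i \<in> {i\<in>{0..m}. P i}"
    then obtain a b where "i = tri a" "i \<le> m" "4 dvd (m - i)" "(m - i) div 4 = tri b"
      by (auto simp: P_def)
    then have "(a, b) \<in> tri_reps m" "i = tri a"
      by (auto simp: tri_reps_def elim!: dvdE)
    then show "i \<in> (\<lambda>(a, b). tri a) ` tri_reps m"
      by force
  next
    fix i assume "i \<in> (\<lambda>(a, b). tri a) ` tri_reps m"
    then show "i \<in> {i\<in>{0..m}. P i}"
      by (auto simp: P_def tri_reps_def)
  qed
  also have "card \<dots> = card (tri_reps m)"
    by (intro card_image inj_onI) (auto simp: tri_reps_def)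
  finally show ?thesis .
qed

lemma odd_square_eq_tri: "odd x \<Longrightarrow> x * x = 8 * tri (x div 2) + 1"
proof -
  assume "odd x"
  then obtain b where "x = 2 * b + 1"
    by (elim oddE)
  with two_times_tri[of b] show ?thesis
    by (simp add: algebra_simps)
qed

lemma card_odd_reps_eq_card_tri_reps: "card (odd_reps (8 * m + 5)) = card (tri_reps m)"
proof -
  have "odd_reps (8 * m + 5) = (\<lambda>(a, b). (2 * a + 1, 2 * b + 1)) ` tri_reps m"
  proof (intro Set.set_eqI iffI)
    fix w assume "w \<in> odd_reps (8 * m + 5)"
    then obtain x y where "odd x" "odd y" "x * x + 4 * (y * y) = 8 * m + 5" "w = (x, y)"
      by (auto simp: odd_reps_def)
    then have "(x div 2, y div 2) \<in> tri_reps m" "w = (2 * (x div 2) + 1, 2 * (y div 2) + 1)"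
      by (simp_all add: tri_reps_def odd_square_eq_tri)
    then show "w \<in> (\<lambda>(a, b). (2 * a + 1, 2 * b + 1)) ` tri_reps m"
      by force
  next
    fix w assume "w \<in> (\<lambda>(a, b). (2 * a + 1, 2 * b + 1)) ` tri_reps m"
    then show "w \<in> odd_reps (8 * m + 5)"
      by (auto simp: odd_reps_def tri_reps_def odd_square_eq_tri[of "2 * _ + 1", simplified])
  qed
  then show ?thesis
    by (simp add: card_image inj_on_def split: prod.splits)
qed

lemma prime_3_mod_4_dvd_sum_squares:
  fixes p a b :: nat
  assumes "prime p" "p mod 4 = 3" "p dvd a ^ 2 + b ^ 2"
  shows "p dvd a"
proof (rule ccontr)
  assume "\<not> p dvd a"
  moreover have "\<not> p dvd b"
  proof
    assume "p dvd b"
    then have "p dvd b ^ 2"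
      by (simp add: power2_eq_square)
    then have "p dvd a ^ 2"
      using assms(3) by (simp add: dvd_add_left_iff)
    then show False
      using \<open>\<not> p dvd a\<close> assms(1) prime_dvd_power by blast
  qed
  ultimately have "[a ^ (p - 1) = 1] (mod p)" "[b ^ (p - 1) = 1] (mod p)"
    using assms(1) by (blast intro: fermat_theorem)+
  then have fermat: "[int a ^ (p - 1) = 1] (mod int p)" "[int b ^ (p - 1) = 1] (mod int p)"
    by (metis cong_int_iff of_nat_1 of_nat_power)+
  define h where "h = (p - 1) div 2"
  have h: "p - 1 = 2 * h" "odd h"
    using assms(2) unfolding h_def by presburger+
  have "[int a ^ 2 = - (int b ^ 2)] (mod int p)"
    using assms(3) by (simp add: cong_iff_dvd_diff flip: of_nat_power) (simp only: of_nat_add[symmetric] int_dvd_int_iff)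
  then have "[(int a ^ 2) ^ h = (- (int b ^ 2)) ^ h] (mod int p)"
    by (rule cong_pow)
  then have "[int a ^ (p - 1) = - (int b ^ (p - 1))] (mod int p)"
    using h by (simp add: power_mult)
  moreover have "[- (int b ^ (p - 1)) = - 1] (mod int p)"
    using fermat(2) by (rule cong_uminus)
  ultimately have "[1 = - 1] (mod int p)"
    using fermat(1) by (metis cong_sym cong_trans)
  then have "p dvd 2"
    by (simp add: cong_iff_dvd_diff) presburger
  then show False
    using assms(2) by (auto dest: dvd_imp_le)
qed

lemma prime_3_mod_4_dvd_odd_reps:
  fixes p x y :: nat
  assumes "prime p" "p mod 4 = 3" "p dvd x * x + 4 * (y * y)"
  shows "p dvd x \<and> p dvd y"
proof -
  have "x * x + 4 * (y * y) = x ^ 2 + (2 * y) ^ 2"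
    by (simp add: power2_eq_square)
  with assms have "p dvd x" "p dvd 2 * y"
    using prime_3_mod_4_dvd_sum_squares[of p x "2 * y"] prime_3_mod_4_dvd_sum_squares[of p "2 * y" x]
    by (simp_all add: add.commute)
  moreover have "\<not> p dvd 2"
    using assms(2) by (auto dest: dvd_imp_le)
  ultimately show ?thesis
    using assms(1) prime_dvd_mult_nat by blast
qed

lemma card_odd_reps_mult_prime_square:
  assumes "prime p" "p mod 4 = 3"
  shows "card (odd_reps (p * p * N)) = card (odd_reps N)"
proof -
  have "odd p" "0 < p"
    using assms by (presburger, simp add: prime_gt_0_nat)
  have "odd_reps (p * p * N) = (\<lambda>(x, y). (p * x, p * y)) ` odd_reps N"
  proof (intro Set.set_eqI iffI)
    fix w assume "w \<in> odd_reps (p * p * N)"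
    then obtain X Y where XY: "odd X" "odd Y" "X * X + 4 * (Y * Y) = p * p * N" "w = (X, Y)"
      by (auto simp: odd_reps_def)
    then have "p dvd X" "p dvd Y"
      using prime_3_mod_4_dvd_odd_reps[OF assms, of X Y] by simp_all
    then obtain x y where xy: "X = p * x" "Y = p * y"
      by (auto elim!: dvdE)
    have "p * p * (x * x + 4 * (y * y)) = p * p * N"
      using XY(3) xy by (simp add: algebra_simps)
    then have "x * x + 4 * (y * y) = N"
      using \<open>0 < p\<close> by simp
    moreover have "odd x" "odd y"
      using XY(1,2) xy by auto
    ultimately show "w \<in> (\<lambda>(x, y). (p * x, p * y)) ` odd_reps N"
      using XY(4) xy by (force simp: odd_reps_def)
  next
    fix w assume "w \<in> (\<lambda>(x, y). (p * x, p * y)) ` odd_reps N"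
    then show "w \<in> odd_reps (p * p * N)"
      using \<open>odd p\<close> by (auto simp: odd_reps_def algebra_simps)
  qed
  moreover have "inj_on (\<lambda>(x, y). (p * x, p * y)) (odd_reps N)"
    using \<open>0 < p\<close> by (auto simp: inj_on_def)
  ultimately show ?thesis
    by (simp add: card_image)
qed

lemma card_odd_reps_mult_prime_power:
  assumes "prime p" "p mod 4 = 3"
  shows "card (odd_reps (p ^ (2 * a) * N)) = card (odd_reps N)"
proof (induction a)
  case 0
  then show ?case by simp
next
  case (Suc a)
  have "p ^ (2 * Suc a) * N = p * p * (p ^ (2 * a) * N)"
    by (simp add: algebra_simps)
  then show ?case
    by (simp only: card_odd_reps_mult_prime_square[OF assms] Suc.IH)
qed

lemma odd_reps_mult_prime_eq_empty:
  assumes "prime p" "p mod 4 = 3" "\<not> p dvd M"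
  shows "odd_reps (p * M) = {}"
proof (intro equals0I)
  fix w assume "w \<in> odd_reps (p * M)"
  then obtain X Y where XY: "X * X + 4 * (Y * Y) = p * M"
    by (auto simp: odd_reps_def)
  then have "p dvd X" "p dvd Y"
    using prime_3_mod_4_dvd_odd_reps[OF assms(1,2), of X Y] by simp_all
  then obtain x y where "X = p * x" "Y = p * y"
    by (auto elim!: dvdE)
  with XY have "p * (p * (x * x + 4 * (y * y))) = p * M"
    by (simp add: algebra_simps)
  then have "M = p * (x * x + 4 * (y * y))"
    using prime_gt_0_nat[OF assms(1)] by simp
  with assms(3) show False
    by simp
qed

lemma psi_mult_psi4_nth_eq_card_odd_reps: "(psi * psi4) $ m = int (card (odd_reps (8 * m + 5)))"
  by (simp add: psi_mult_psi4_nth card_odd_reps_eq_card_tri_reps)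

lemma b_ell_16_mod_2: "int (b_ell 16 n) mod 2 = (psi * psi4) $ n mod 2"
  using b_ell_16_eq_psi_psi4_nth[of n] by (simp only: of_nat_eq_of_int_bit_iff)

lemma odd_power_mod_8: "odd (p :: nat) \<Longrightarrow> p ^ (2 * a) mod 8 = 1"
proof -
  assume "odd p"
  then have "p ^ 2 mod 8 = 1"
    using odd_square_eq_tri[of p] by (simp add: power2_eq_square)
  have "p ^ (2 * a) mod 8 = (p ^ 2 mod 8) ^ a mod 8"
    by (simp add: power_mult power_mod)
  with \<open>p ^ 2 mod 8 = 1\<close> show ?thesis
    by simp
qed

lemma eight_times_add_div_8: "c mod 8 = 5 \<Longrightarrow> 8 * (a + (c - 5) div 8) + 5 = 8 * a + (c :: nat)"
proof -
  assume "c mod 8 = 5"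
  then have "c = 8 * (c div 8) + 5"
    using div_mult_mod_eq[of c 8] by simp
  then obtain q where "c = 8 * q + 5"
    by blast
  then show ?thesis
    by simp
qed

lemma eight_times_index_plus_5:
  fixes p :: nat
  assumes "odd p"
  shows "8 * (p ^ (2 * a) * n + (5 * p ^ (2 * a) - 5) div 8) + 5 = p ^ (2 * a) * (8 * n + 5)"
proof -
  have "5 * p ^ (2 * a) mod 8 = 5 * (p ^ (2 * a) mod 8) mod 8"
    by (rule mod_mult_right_eq[symmetric])
  then have mod_8: "5 * p ^ (2 * a) mod 8 = 5"
    using odd_power_mod_8[OF assms, of a] by simp
  show ?thesis
    unfolding eight_times_add_div_8[OF mod_8] by (simp add: algebra_simps)
qed

lemma eight_times_shifted_index_plus_5:
  fixes p :: nat
  assumes "odd p"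
  shows "8 * (p ^ (2 * a + 2) * n + ((8 * i + 5 * p) * p ^ (2 * a + 1) - 5) div 8) + 5
    = p ^ (2 * a) * (p * (p * (8 * n + 5) + 8 * i))"
proof -
  have "(8 * i + 5 * p) * p ^ (2 * a + 1) = 8 * (i * p ^ (2 * a + 1)) + 5 * p ^ (2 * (a + 1))"
    by (simp add: algebra_simps)
  also have "\<dots> mod 8 = 5 * (p ^ (2 * (a + 1)) mod 8) mod 8"
    by (simp add: mod_mult_right_eq)
  finally have mod_8: "(8 * i + 5 * p) * p ^ (2 * a + 1) mod 8 = 5"
    using odd_power_mod_8[OF assms, of "a + 1"] by simp
  show ?thesis
    unfolding eight_times_add_div_8[OF mod_8] by (simp add: algebra_simps)
qed

lemma prime_not_dvd_mult_add_8:
  fixes p i a :: nat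
  assumes "prime p" "odd p" "0 < i" "i < p"
  shows "\<not> p dvd p * a + 8 * i"
proof
  assume "p dvd p * a + 8 * i"
  then have "p dvd 8 * i"
    by (simp add: dvd_add_right_iff)
  moreover have "\<not> p dvd i"
    using assms(3,4) by (auto dest: dvd_imp_le)
  moreover have "\<not> p dvd 8"
  proof
    assume "p dvd 8"
    then have "p dvd 2"
      using assms(1) prime_dvd_power[of p 2 3] by simp
    then have "p = 2"
      using prime_ge_2_nat[OF assms(1)] by (auto dest: dvd_imp_le)
    with assms(2) show False
      by simp
  qed
  ultimately show False
    using prime_dvd_mult_nat[OF assms(1)] by blast
qed

theorem theorem3p24:
  fixes p :: nat
  assumes "prime p" and "p mod 4 = 3"
  shows "(\<forall>\<alpha> n. int (b_ell 16 (p ^ (2 * \<alpha>) * n + (5 * p ^ (2 * \<alpha>) - 5) div 8)) mod 2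
                 = fps_nth (psi * psi4) n mod 2) \<and>
         (\<forall>\<alpha> n i. 1 \<le> i \<and> i \<le> p - 1 \<longrightarrow>
           even (b_ell 16 (p ^ (2 * \<alpha> + 2) * n + ((8 * i + 5 * p) * p ^ (2 * \<alpha> + 1) - 5) div 8)))"
proof -
  have "odd p"
    using assms(2) by presburger
  note card_odd_reps = psi_mult_psi4_nth_eq_card_odd_reps card_odd_reps_mult_prime_power[OF assms]
  show ?thesis
  proof (intro conjI allI impI)
    fix \<alpha> n
    show "int (b_ell 16 (p ^ (2 * \<alpha>) * n + (5 * p ^ (2 * \<alpha>) - 5) div 8)) mod 2 = (psi * psi4) $ n mod 2"
      unfolding b_ell_16_mod_2 card_odd_reps eight_times_index_plus_5[OF \<open>odd p\<close>] ..
  next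
    fix \<alpha> n i assume "1 \<le> i \<and> i \<le> p - 1"
    then have "\<not> p dvd p * (8 * n + 5) + 8 * i"
      using assms(1) \<open>odd p\<close> by (intro prime_not_dvd_mult_add_8) auto
    then have "int (b_ell 16 (p ^ (2 * \<alpha> + 2) * n + ((8 * i + 5 * p) * p ^ (2 * \<alpha> + 1) - 5) div 8)) mod 2 = 0"
      unfolding b_ell_16_mod_2 card_odd_reps eight_times_shifted_index_plus_5[OF \<open>odd p\<close>]
      by (simp add: odd_reps_mult_prime_eq_empty[OF assms])
    then show "even (b_ell 16 (p ^ (2 * \<alpha> + 2) * n + ((8 * i + 5 * p) * p ^ (2 * \<alpha> + 1) - 5) div 8))"
      by presburger
  qed
qed

end
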